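(* Let $N, J \ge 1$ be integers and let $F_1,\dots,F_J:\mathbb{R}_+^N\to\mathbb{R}_+$ be upper semicontinuous functions that are homogeneous of degree 1 (i.e. $F_j(\lambda x)=\lambda F_j(x)$ for all $\lambda\ge 0$, $x\in\mathbb{R}_+^N$). Define $F:\mathbb{R}_+^N\to\mathbb{R}_+$ by $$F(x)=\max\Big\{\sum_{j=1}^J F_j(x_j): x_j\in\mathbb{R}_+^N \text{ for all } j,\ \sum_{j=1}^J x_j=x\Big\}.$$ Let $w\in\mathbb{R}^N$ and suppose $x^*\in\arg\max_{x\ge 0}\,(F(x)-w\cdot x)$. Let $x_1^*,\dots,x_J^*\in\mathbb{R}_+^N$ be any vectors with $x^*=\sum_{j=1}^J x_j^*$ and $x_j^*\in\arg\max_{x\ge 0}\,(F_j(x)-w\cdot x)$ for every $j$. Let $C$ be the smallest convex cone containing $\{x_1^*,\dots,x_J^*\}$. Then $F(x)=w\cdot x$ for all $x\in C$.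
   Context: A production function is an upper semicontinuous function $\mathbb{R}_+^N\to\mathbb{R}_+$. The function $F$ defined in the claim (the maximum is attained) is called the aggregate production function of $F_1,\dots,F_J$. A set $C$ is a cone if $y\in C$, $\alpha\ge0$ imply $\alpha y\in C$; the smallest convex cone containing a finite set $\{y_j\}$ is $\{\sum_j\alpha_j y_j:\alpha_j\ge 0\}$. $x\ge 0$ means $x\in\mathbb{R}_+^N$. *)

theory Defs
  imports "HOL-Analysis.Analysis"
begin

text \<open>The nonnegative orthant R_+^N, with N given by the finite index type 'n.\<close>
definition nonneg_orthant :: "(real ^ 'n) set" where
  "nonneg_orthant = {x. \<forall>i. 0 \<le> x $ i}"

definition usc_on :: "('a::topological_space) set \<Rightarrow> ('a \<Rightarrow> real) \<Rightarrow> bool" where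
  "usc_on S f \<longleftrightarrow> (\<forall>a. openin (top_of_set S) {x \<in> S. f x < a})"

definition production_function :: "(real ^ 'n \<Rightarrow> real) \<Rightarrow> bool" where
  "production_function f \<longleftrightarrow> usc_on nonneg_orthant f \<and> (\<forall>x\<in>nonneg_orthant. 0 \<le> f x)"

text \<open>Aggregate production function of Fs 1, ..., Fs J (the supremum is attained, so it is
  the maximum of the paper).\<close>
definition aggregate :: "nat \<Rightarrow> (nat \<Rightarrow> real ^ 'n \<Rightarrow> real) \<Rightarrow> real ^ 'n \<Rightarrow> real" where
  "aggregate J Fs x = Sup {(\<Sum>j\<in>{1..J}. Fs j (xs j)) | xs.
       (\<forall>j\<in>{1..J}. xs j \<in> nonneg_orthant) \<and> (\<Sum>j\<in>{1..J}. xs j) = x}"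

definition is_argmax_nonneg :: "(real ^ 'n \<Rightarrow> real) \<Rightarrow> real ^ 'n \<Rightarrow> bool" where
  "is_argmax_nonneg g x \<longleftrightarrow> x \<in> nonneg_orthant \<and> (\<forall>y\<in>nonneg_orthant. g y \<le> g x)"

end

theory Submission
  imports Defs
begin

text \<open>For a technology homogeneous of degree 1, maximal profit is either 0 or unbounded
  (scale the input up). So a firm that attains its maximal profit at some input makes zero
  profit there, and its output never exceeds the input cost \<open>w \<bullet> y\<close>. Summing over firms bounds
  the aggregate production function by \<open>w \<bullet> x\<close>, and any nonnegative combination of the firms'
  optimal inputs is a decomposition attaining this bound.\<close>

lemma zero_mem_nonneg_orthant: "0 \<in> nonneg_orthant"
  by (simp add: nonneg_orthant_def)

lemma scaleR_mem_nonneg_orthant: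
  "0 \<le> c \<Longrightarrow> x \<in> nonneg_orthant \<Longrightarrow> c *\<^sub>R x \<in> nonneg_orthant"
  by (simp add: nonneg_orthant_def)

lemma homogeneous_argmax_profit:
  assumes hom: "\<And>lam x. lam \<ge> 0 \<Longrightarrow> x \<in> nonneg_orthant \<Longrightarrow> f (lam *\<^sub>R x) = lam * f x"
    and opt: "is_argmax_nonneg (\<lambda>x. f x - w \<bullet> x) x0"
  shows "\<And>y. y \<in> nonneg_orthant \<Longrightarrow> f y \<le> w \<bullet> y" and "f x0 = w \<bullet> x0"
proof -
  have x0: "x0 \<in> nonneg_orthant"
    and max: "\<And>y. y \<in> nonneg_orthant \<Longrightarrow> f y - w \<bullet> y \<le> f x0 - w \<bullet> x0"
    using opt by (auto simp: is_argmax_nonneg_def)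
  have "2 * (f x0 - w \<bullet> x0) \<le> f x0 - w \<bullet> x0"
    using max[OF scaleR_mem_nonneg_orthant[OF _ x0, of 2]] hom[OF _ x0, of 2]
    by (simp add: algebra_simps)
  then have profit_nonpos: "f x0 - w \<bullet> x0 \<le> 0"
    by simp
  then show "\<And>y. y \<in> nonneg_orthant \<Longrightarrow> f y \<le> w \<bullet> y"
    using max by fastforce
  have "f 0 = 0"
    using hom[OF _ x0, of 0] by simp
  then show "f x0 = w \<bullet> x0"
    using max[OF zero_mem_nonneg_orthant] profit_nonpos by simp
qed

lemma aggregate_eq_inner:
  assumes le: "\<And>j y. j \<in> {1..J} \<Longrightarrow> y \<in> nonneg_orthant \<Longrightarrow> Fs j y \<le> w \<bullet> y"
    and ys: "\<And>j. j \<in> {1..J} \<Longrightarrow> ys j \<in> nonneg_orthant"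
    and sum_ys: "(\<Sum>j\<in>{1..J}. ys j) = x"
    and eq: "\<And>j. j \<in> {1..J} \<Longrightarrow> Fs j (ys j) = w \<bullet> ys j"
  shows "aggregate J Fs x = w \<bullet> x"
proof -
  let ?S = "{(\<Sum>j\<in>{1..J}. Fs j (zs j)) | zs.
     (\<forall>j\<in>{1..J}. zs j \<in> nonneg_orthant) \<and> (\<Sum>j\<in>{1..J}. zs j) = x}"
  have "w \<bullet> x = (\<Sum>j\<in>{1..J}. Fs j (ys j))"
    unfolding sum_ys[symmetric] inner_sum_right using eq by simp
  then have attained: "w \<bullet> x \<in> ?S"
    using ys sum_ys by blast
  have bound: "s \<le> w \<bullet> x" if "s \<in> ?S" for s
  proof -
    obtain zs where zs: "\<forall>j\<in>{1..J}. zs j \<in> nonneg_orthant" "(\<Sum>j\<in>{1..J}. zs j) = x"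
      and s: "s = (\<Sum>j\<in>{1..J}. Fs j (zs j))"
      using \<open>s \<in> ?S\<close> by blast
    have "s \<le> (\<Sum>j\<in>{1..J}. w \<bullet> zs j)"
      unfolding s by (rule sum_mono) (use zs le in auto)
    also have "\<dots> = w \<bullet> x"
      unfolding zs(2)[symmetric] inner_sum_right ..
    finally show ?thesis .
  qed
  show ?thesis
    unfolding aggregate_def by (rule cSup_eq_maximum) (use attained bound in auto)
qed

theorem theorem1:
  fixes J :: nat
    and Fs :: "nat \<Rightarrow> real ^ 'n \<Rightarrow> real"
    and w xstar :: "real ^ 'n"
    and xs :: "nat \<Rightarrow> real ^ 'n"
  assumes "J \<ge> 1"
    and prod: "\<And>j. j \<in> {1..J} \<Longrightarrow> production_function (Fs j)"
    and hom: "\<And>j lam x. j \<in> {1..J} \<Longrightarrow> lam \<ge> 0 \<Longrightarrow> x \<in> nonneg_orthant \<Longrightarrow>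
                 Fs j (lam *\<^sub>R x) = lam * Fs j x"
    and opt: "is_argmax_nonneg (\<lambda>x. aggregate J Fs x - w \<bullet> x) xstar"
    and decomp: "xstar = (\<Sum>j\<in>{1..J}. xs j)"
    and optj: "\<And>j. j \<in> {1..J} \<Longrightarrow> is_argmax_nonneg (\<lambda>x. Fs j x - w \<bullet> x) (xs j)"
  shows "\<forall>x \<in> {(\<Sum>j\<in>{1..J}. alpha j *\<^sub>R xs j) | alpha. \<forall>j\<in>{1..J}. alpha j \<ge> 0}.
           aggregate J Fs x = w \<bullet> x"
proof clarify
  fix alpha :: "nat \<Rightarrow> real"
  assume alpha: "\<forall>j\<in>{1..J}. alpha j \<ge> 0"
  note profit = homogeneous_argmax_profit[OF hom optj]
  have xs: "xs j \<in> nonneg_orthant" if "j \<in> {1..J}" for j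
    using optj[OF that] by (simp add: is_argmax_nonneg_def)
  show "aggregate J Fs (\<Sum>j\<in>{1..J}. alpha j *\<^sub>R xs j) = w \<bullet> (\<Sum>j\<in>{1..J}. alpha j *\<^sub>R xs j)"
  proof (rule aggregate_eq_inner)
    show "Fs j y \<le> w \<bullet> y" if "j \<in> {1..J}" "y \<in> nonneg_orthant" for j y
      using profit(1) that by blast
    show "alpha j *\<^sub>R xs j \<in> nonneg_orthant" if "j \<in> {1..J}" for j
      using alpha xs that by (simp add: scaleR_mem_nonneg_orthant)
    show "Fs j (alpha j *\<^sub>R xs j) = w \<bullet> (alpha j *\<^sub>R xs j)" if "j \<in> {1..J}" for j
      using alpha xs hom profit(2) that by simp
  qed simp
qed

end
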